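(* Let $p:[0,2\pi]\to[1,\infty)$ be a measurable, essentially bounded, $2\pi$-periodic, $\log$-H\"older continuous function, and let $q:[0,2\pi]\to[1,\infty)$ satisfy $\frac1{p(\theta)}+\frac1{q(\theta)}=1$ for every $\theta\in[0,2\pi]$. For $1/2<r<1$ and $z=|z|e^{i\theta}\in\mathbb{D}$ define $\varphi:[0,2\pi]\to(0,\infty)$ by $\varphi(t)=\frac{(1-|z|)^{1/q(\theta)}}{|1-|z|re^{i(t-\theta)}|}$. Then there is a constant $C>0$, independent of $r$, $z$ and $t$, such that whenever $\varphi(t)>1$ one has $\varphi(t)^{p(t)}\le C\,\varphi(t)^{p(\theta)}$.
   Context: $\mathbb{D}$ is the open unit disk. $p$ is $\log$-H\"older continuous if there is $C_{\log}>0$ with $|p(x)-p(y)|\le C_{\log}/\log(1/|x-y|)$ for all $x,y\in[0,2\pi]$. *)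

theory Defs
  imports "HOL-Analysis.Analysis"
begin

text \<open>log-Hoelder continuity on [0,2pi], in the standard form restricted to
  0 < |x-y| < 1/2 (where log(1/|x-y|) is positive).\<close>
definition log_hoelder :: "(real \<Rightarrow> real) \<Rightarrow> bool" where
  "log_hoelder p \<longleftrightarrow> (\<exists>Clog>0. \<forall>x\<in>{0..2*pi}. \<forall>y\<in>{0..2*pi}.
      0 < \<bar>x - y\<bar> \<and> \<bar>x - y\<bar> < 1/2 \<longrightarrow> \<bar>p x - p y\<bar> \<le> Clog / ln (1 / \<bar>x - y\<bar>))"

definition phi_fun :: "(real \<Rightarrow> real) \<Rightarrow> real \<Rightarrow> complex \<Rightarrow> real \<Rightarrow> real \<Rightarrow> real" where
  "phi_fun q r z \<theta> t = (1 - cmod z) powr (1 / q \<theta>) / cmod (1 - complex_of_real (cmod z * r) * cis (t - \<theta>))"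

end

theory Submission
  imports Defs
begin

text \<open>
  Write \<open>\<phi>(t)^p(t) = \<phi>(t)^(p(t) - p(\<theta>)) \<phi>(t)^p(\<theta>)\<close>; only the first factor
  needs a bound, and only when \<open>p(t) > p(\<theta>)\<close>. The numerator of \<open>\<phi>\<close> is at most 1
  and \<open>|1 - \<rho> e^(is)|\<close> is bounded below by a multiple of the distance \<open>d\<close> between
  \<open>t\<close> and \<open>\<theta>\<close> on the circle, so \<open>\<phi> \<le> 6/d\<close>. For small \<open>d\<close>, log-Hoelder
  continuity, transported to the circle by periodicity, gives
  \<open>p(t) - p(\<theta>) \<le> 2C/log(1/d)\<close>, and \<open>(6/d)^(2C/log(1/d))\<close> stays bounded. For
  \<open>d \<ge> 1/2\<close> both \<open>\<phi>\<close> and \<open>p\<close> are bounded.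
\<close>

lemma sin_ge_third:
  fixes y :: real
  assumes "0 \<le> y" "y \<le> 2"
  shows "y / 3 \<le> sin y"
proof -
  have "\<bar>sin y - (\<Sum>m<3. sin_coeff m * y ^ m)\<bar> \<le> inverse (fact 3) * \<bar>y\<bar> ^ 3"
    by (rule Maclaurin_sin_bound)
  moreover have "(\<Sum>m<3. sin_coeff m * y ^ m) = y"
    by (simp add: numeral_3_eq_3 sin_coeff_def)
  ultimately have "\<bar>sin y - y\<bar> \<le> y ^ 3 / 6"
    using assms by (simp add: fact_numeral)
  moreover have "y ^ 3 \<le> 4 * y"
  proof -
    have "y * y \<le> 2 * 2" using assms by (intro mult_mono) auto
    then have "y * (y * y) \<le> y * 4" using assms by (intro mult_left_mono) auto
    then show ?thesis by (simp add: power3_eq_cube mult.commute)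
  qed
  ultimately show ?thesis by linarith
qed

lemma cmod_one_minus_cis_sq:
  "cmod (1 - complex_of_real \<rho> * cis s) ^ 2 = (1 - \<rho>)\<^sup>2 + 4 * \<rho> * sin (s / 2) ^ 2"
proof -
  have "cmod (1 - complex_of_real \<rho> * cis s) ^ 2 = (1 - \<rho> * cos s)\<^sup>2 + (\<rho> * sin s)\<^sup>2"
    by (simp add: cmod_power2)
  also have "\<dots> = 1 - 2 * \<rho> * cos s + \<rho>\<^sup>2 * (sin s ^ 2 + cos s ^ 2)"
    by algebra
  also have "\<dots> = 1 - 2 * \<rho> * cos s + \<rho>\<^sup>2" by simp
  also have "cos s = 1 - 2 * sin (s / 2) ^ 2"
    using cos_double_sin[of "s / 2"] by simp
  finally show ?thesis by (simp add: power2_eq_square algebra_simps)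
qed

lemma cmod_one_minus_cis_ge:
  assumes "0 \<le> \<rho>"
  shows "1 - \<rho> \<le> cmod (1 - complex_of_real \<rho> * cis s)"
proof (rule power2_le_imp_le)
  show "(1 - \<rho>)\<^sup>2 \<le> cmod (1 - complex_of_real \<rho> * cis s) ^ 2"
    using assms by (simp add: cmod_one_minus_cis_sq)
qed simp

definition arc_dist :: "real \<Rightarrow> real \<Rightarrow> real" where
  "arc_dist x y = min \<bar>x - y\<bar> (2 * pi - \<bar>x - y\<bar>)"

lemma cmod_one_minus_cis_ge_arc_dist:
  assumes "1/4 \<le> \<rho>" "\<bar>t - \<theta>\<bar> \<le> 2 * pi"
  shows "arc_dist t \<theta> / 6 \<le> cmod (1 - complex_of_real \<rho> * cis (t - \<theta>))"
proof -
  define s where "s = t - \<theta>"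
  define d where "d = arc_dist t \<theta>"
  have d: "0 \<le> d" "d \<le> pi" "d = min \<bar>s\<bar> (2 * pi - \<bar>s\<bar>)"
    using assms by (auto simp: d_def s_def arc_dist_def)
  have "sin (d / 2) = sin (\<bar>s\<bar> / 2)"
  proof (cases "\<bar>s\<bar> \<le> pi")
    case False
    then have "d / 2 = pi - \<bar>s\<bar> / 2" using d by auto
    then show ?thesis by (metis sin_pi_minus)
  qed (use d in auto)
  moreover have "\<bar>sin (s / 2)\<bar> = \<bar>sin (\<bar>s\<bar> / 2)\<bar>"
    by (cases "s \<ge> 0") auto
  moreover have "d / 6 \<le> sin (d / 2)"
    using sin_ge_third[of "d / 2"] d pi_less_4 by auto
  ultimately have "d / 6 \<le> \<bar>sin (s / 2)\<bar>" by auto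
  then have "(d / 6)\<^sup>2 \<le> sin (s / 2) ^ 2"
    using d by (metis power2_abs power_mono divide_nonneg_pos zero_less_numeral)
  also have "\<dots> \<le> 4 * \<rho> * sin (s / 2) ^ 2"
    using assms mult_right_mono[of 1 "4 * \<rho>" "sin (s / 2) ^ 2"] by simp
  also have "\<dots> \<le> cmod (1 - complex_of_real \<rho> * cis s) ^ 2"
    by (simp add: cmod_one_minus_cis_sq)
  finally show ?thesis
    unfolding d_def s_def by (rule power2_le_imp_le) simp
qed

lemma phi_fun_le_arc_dist:
  assumes "0 \<le> q \<theta>" "cmod z < 1" "0 \<le> r" "r \<le> 1" "\<bar>t - \<theta>\<bar> \<le> 2 * pi"
    and "0 < arc_dist t \<theta>"
  shows "phi_fun q r z \<theta> t \<le> max 2 (6 / arc_dist t \<theta>)"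
proof -
  define \<rho> where "\<rho> = cmod z * r"
  define D where "D = cmod (1 - complex_of_real \<rho> * cis (t - \<theta>))"
  have \<rho>: "0 \<le> \<rho>" "\<rho> < 1"
    using assms mult_left_le[of r "cmod z"] by (auto simp: \<rho>_def)
  have "(1 - cmod z) powr (1 / q \<theta>) \<le> 1"
    using assms by (intro powr_le1) auto
  then have phi_le: "phi_fun q r z \<theta> t \<le> 1 / D"
    by (simp add: phi_fun_def D_def \<rho>_def divide_right_mono)
  show ?thesis
  proof (cases "\<rho> < 1/4")
    case True
    then have "3/4 \<le> D" using cmod_one_minus_cis_ge[OF \<rho>(1), of "t - \<theta>"] by (simp add: D_def)
    then have "1 / D \<le> 2" by (simp add: field_simps)
    then show ?thesis using phi_le by linarith
  next
    case False
    then have "arc_dist t \<theta> / 6 \<le> D"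
      using assms cmod_one_minus_cis_ge_arc_dist by (simp add: D_def)
    then have "1 / D \<le> 6 / arc_dist t \<theta>"
      using assms frac_le[of 1 1 "arc_dist t \<theta> / 6" D] by simp
    then show ?thesis using phi_le by linarith
  qed
qed

definition log_hoelder_with :: "real \<Rightarrow> (real \<Rightarrow> real) \<Rightarrow> bool" where
  "log_hoelder_with C p \<longleftrightarrow> (\<forall>x\<in>{0..2*pi}. \<forall>y\<in>{0..2*pi}.
      0 < \<bar>x - y\<bar> \<and> \<bar>x - y\<bar> < 1/2 \<longrightarrow> \<bar>p x - p y\<bar> \<le> C / ln (1 / \<bar>x - y\<bar>))"

lemma log_hoelder_iff_with: "log_hoelder p \<longleftrightarrow> (\<exists>C>0. log_hoelder_with C p)"
  by (simp add: log_hoelder_def log_hoelder_with_def)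

lemma log_hoelder_with_le:
  assumes "log_hoelder_with C p" "0 \<le> C" "x \<in> {0..2*pi}" "y \<in> {0..2*pi}"
    and "\<bar>x - y\<bar> \<le> e" "0 < e" "e < 1/2"
  shows "\<bar>p x - p y\<bar> \<le> C / ln (1 / e)"
proof (cases "x = y")
  case True
  then show ?thesis using assms by simp
next
  case False
  then have "\<bar>p x - p y\<bar> \<le> C / ln (1 / \<bar>x - y\<bar>)"
    using assms by (auto simp: log_hoelder_with_def)
  also have "\<dots> \<le> C / ln (1 / e)"
    using assms False by (intro divide_left_mono) (auto simp: divide_simps)
  finally show ?thesis .
qed

lemma log_hoelder_with_arc_dist:
  assumes "log_hoelder_with C p" "0 \<le> C" "p 0 = p (2*pi)"
    and t: "t \<in> {0..2*pi}" and \<theta>: "\<theta> \<in> {0..2*pi}"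
    and d: "0 < arc_dist t \<theta>" "arc_dist t \<theta> < 1/2"
  shows "\<bar>p t - p \<theta>\<bar> \<le> 2 * C / ln (1 / arc_dist t \<theta>)"
proof -
  define B where "B = C / ln (1 / arc_dist t \<theta>)"
  have le: "\<bar>p x - p y\<bar> \<le> B"
    if "x \<in> {0..2*pi}" "y \<in> {0..2*pi}" "\<bar>x - y\<bar> \<le> arc_dist t \<theta>" for x y
    unfolding B_def using log_hoelder_with_le[OF assms(1,2) that d] .
  have "0 \<le> B" using assms by (simp add: B_def)
  moreover consider "\<bar>t - \<theta>\<bar> \<le> arc_dist t \<theta>"
    | "\<bar>t - 0\<bar> \<le> arc_dist t \<theta>" "\<bar>2*pi - \<theta>\<bar> \<le> arc_dist t \<theta>"
    | "\<bar>t - 2*pi\<bar> \<le> arc_dist t \<theta>" "\<bar>0 - \<theta>\<bar> \<le> arc_dist t \<theta>"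
    using t \<theta> unfolding arc_dist_def by (smt (verit) atLeastAtMost_iff)
  then have "\<bar>p t - p \<theta>\<bar> \<le> 2 * B"
  proof cases
    case 1
    then show ?thesis using le[OF t \<theta>] \<open>0 \<le> B\<close> by linarith
  next
    case 2
    then show ?thesis using le[OF t, of 0] le[OF _ \<theta>, of "2*pi"] assms(3) by auto
  next
    case 3
    then show ?thesis using le[OF t, of "2*pi"] le[OF _ \<theta>, of 0] assms(3) by auto
  qed
  then show ?thesis by (simp add: B_def)
qed

lemma arc_dist_eq_0_imp_eq:
  assumes "p 0 = p (2*pi)" "t \<in> {0..2*pi}" "\<theta> \<in> {0..2*pi}" "arc_dist t \<theta> = 0"
  shows "p t = p \<theta>"
proof -
  have "t = \<theta> \<or> (t = 0 \<and> \<theta> = 2*pi) \<or> (t = 2*pi \<and> \<theta> = 0)"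
    using assms(2-4) unfolding arc_dist_def by (smt (verit) atLeastAtMost_iff)
  then show ?thesis using assms(1) by auto
qed

lemma log_hoelder_with_continuous_on:
  assumes "log_hoelder_with C p" "0 < C"
  shows "continuous_on {0..2*pi} p"
  unfolding continuous_on_iff
proof (intro ballI allI impI)
  fix x e :: real
  assume x: "x \<in> {0..2*pi}" and e: "0 < e"
  define \<delta> where "\<delta> = min (1/4) (exp (- (C / e)))"
  have "0 < \<delta>" by (simp add: \<delta>_def)
  moreover have "dist (p y) (p x) < e" if y: "y \<in> {0..2*pi}" "dist y x < \<delta>" for y
  proof (cases "y = x")
    case False
    then have yx: "0 < \<bar>y - x\<bar>" "\<bar>y - x\<bar> < \<delta>"
      using y by (auto simp: dist_real_def)
    have "ln \<bar>y - x\<bar> < - (C / e)"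
      using yx by (simp add: \<delta>_def ln_less_cancel_iff[symmetric, of _ "exp (- (C / e))"])
    then have lt: "C / e < ln (1 / \<bar>y - x\<bar>)"
      using yx by (simp add: ln_div)
    have "\<bar>p y - p x\<bar> \<le> C / ln (1 / \<bar>y - x\<bar>)"
      using assms(1) y(1) x yx by (auto simp: log_hoelder_with_def \<delta>_def)
    also have "\<dots> < C / (C / e)"
    proof -
      have "0 < C / e" using assms(2) e by simp
      then have "0 < ln (1 / \<bar>y - x\<bar>) * (C / e)"
        using lt by (intro mult_pos_pos) auto
      then show ?thesis using lt assms(2) by (intro divide_strict_left_mono) auto
    qed
    finally show ?thesis using assms(2) by (simp add: dist_real_def)
  qed (use e in simp)
  ultimately show "\<exists>\<delta>>0. \<forall>y\<in>{0..2*pi}. dist y x < \<delta> \<longrightarrow> dist (p y) (p x) < e"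
    by blast
qed

lemma powr_le_exp_of_log_bound:
  fixes \<phi> \<delta> a c d :: real
  assumes "1 < \<phi>" "\<phi> \<le> a / d" "1 \<le> a" "0 < d" "d \<le> 1/2" "0 \<le> \<delta>" "\<delta> \<le> c / ln (1 / d)"
  shows "\<phi> powr \<delta> \<le> exp (c * (ln a / ln 2 + 1))"
proof -
  define L where "L = ln (1 / d)"
  have L: "ln 2 \<le> L"
    using assms by (auto simp: L_def field_simps)
  then have "0 < L" using ln_gt_zero[of 2] by linarith
  have "ln \<phi> \<le> ln (a / d)"
    using assms by (subst ln_le_cancel_iff) auto
  also have "\<dots> = ln a + L"
    using assms by (simp add: L_def ln_div)
  finally have "\<delta> * ln \<phi> \<le> c / L * (ln a + L)"
    using assms by (intro mult_mono) (auto simp: L_def)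
  also have "\<dots> = c * (ln a / L + 1)"
    using \<open>0 < L\<close> by (simp add: field_simps)
  also have "\<dots> \<le> c * (ln a / ln 2 + 1)"
  proof -
    have "0 \<le> c / L" using assms(6,7) by (simp add: L_def)
    then have "0 \<le> c" using \<open>0 < L\<close> by (simp add: zero_le_divide_iff)
    moreover have "ln a / L \<le> ln a / ln 2"
      using L \<open>0 < L\<close> assms by (intro divide_left_mono) auto
    ultimately show ?thesis by (intro mult_left_mono) auto
  qed
  finally show ?thesis
    using assms(1) by (simp add: powr_def mult.commute)
qed

lemma phi_fun_powr_le:
  assumes hoelder: "log_hoelder_with C p" "0 < C" and per: "p 0 = p (2*pi)"
    and p_le: "\<forall>x\<in>{0..2*pi}. p x \<le> P" and p_nonneg: "0 \<le> p \<theta>"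
    and "0 \<le> q \<theta>" "cmod z < 1" "0 \<le> r" "r \<le> 1"
    and t: "t \<in> {0..2*pi}" and \<theta>: "\<theta> \<in> {0..2*pi}"
    and \<phi>_gt: "1 < phi_fun q r z \<theta> t"
  shows "phi_fun q r z \<theta> t powr p t
    \<le> max (exp (2 * C * (ln 6 / ln 2 + 1))) (12 powr P) * phi_fun q r z \<theta> t powr p \<theta>"
proof -
  define \<phi> where "\<phi> = phi_fun q r z \<theta> t"
  define K where "K = max (exp (2 * C * (ln 6 / ln 2 + 1))) (12 powr P)"
  define d where "d = arc_dist t \<theta>"
  have "1 < \<phi>" using \<phi>_gt by (simp add: \<phi>_def)
  have "\<phi> powr (p t - p \<theta>) \<le> K"
  proof (cases "p t - p \<theta> \<le> 0")
    case True
    then have "\<phi> powr (p t - p \<theta>) \<le> 1"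
      using \<open>1 < \<phi>\<close> powr_mono[of "p t - p \<theta>" 0 \<phi>] by simp
    moreover have "1 \<le> exp (2 * C * (ln 6 / ln 2 + 1))"
      using hoelder(2) by (simp add: one_le_exp_iff)
    ultimately show ?thesis unfolding K_def by (metis le_max_iff_disj order_trans)
  next
    case False
    have "0 \<le> d" using t \<theta> by (auto simp: d_def arc_dist_def)
    moreover have "d \<noteq> 0" using arc_dist_eq_0_imp_eq[OF per t \<theta>] False by (auto simp: d_def)
    ultimately have "0 < d" by simp
    have \<phi>_le: "\<phi> \<le> max 2 (6 / d)"
    proof -
      have "\<bar>t - \<theta>\<bar> \<le> 2 * pi" using t \<theta> by auto
      then show ?thesis
        using phi_fun_le_arc_dist[of q \<theta> z r t] assms \<open>0 < d\<close> by (simp add: \<phi>_def d_def)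
    qed
    show ?thesis
    proof (cases "d < 1/2")
      case True
      have "2 < 6 / d" using True \<open>0 < d\<close> by (simp add: field_simps)
      then have "\<phi> \<le> 6 / d" using \<phi>_le by simp
      moreover have "p t - p \<theta> \<le> 2 * C / ln (1 / d)"
        using log_hoelder_with_arc_dist[OF hoelder(1) _ per t \<theta>] hoelder(2) True \<open>0 < d\<close>
        by (simp add: d_def)
      ultimately have "\<phi> powr (p t - p \<theta>) \<le> exp (2 * C * (ln 6 / ln 2 + 1))"
        using False True \<open>1 < \<phi>\<close> \<open>0 < d\<close> by (intro powr_le_exp_of_log_bound) auto
      then show ?thesis by (simp add: K_def)
    next
      case False
      then have "6 / d \<le> 12" using \<open>0 < d\<close> by (simp add: field_simps)
      then have "\<phi> \<le> 12" using \<phi>_le by simp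
      then have "\<phi> powr (p t - p \<theta>) \<le> 12 powr (p t - p \<theta>)"
        using \<open>\<not> p t - p \<theta> \<le> 0\<close> \<open>1 < \<phi>\<close> by (intro powr_mono2) auto
      also have "\<dots> \<le> 12 powr P"
        using p_le[rule_format, OF t] p_nonneg by (intro powr_mono) auto
      finally show ?thesis by (simp add: K_def)
    qed
  qed
  then have "\<phi> powr (p t - p \<theta>) * \<phi> powr p \<theta> \<le> K * \<phi> powr p \<theta>"
    by (intro mult_right_mono) auto
  then show ?thesis
    by (simp add: \<phi>_def K_def powr_add[symmetric])
qed

theorem lemma2p11:
  fixes p q :: "real \<Rightarrow> real"
  assumes p_ge: "\<forall>x\<in>{0..2*pi}. p x \<ge> 1"
    and p_meas: "p \<in> borel_measurable (lebesgue_on {0..2*pi})"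
    and p_ess_bdd: "\<exists>M. AE x in lebesgue_on {0..2*pi}. p x \<le> M"
    and p_per: "p 0 = p (2*pi)"
    and p_logH: "log_hoelder p"
    and q_ge: "\<forall>x\<in>{0..2*pi}. q x \<ge> 1"
    and pq: "\<forall>x\<in>{0..2*pi}. 1 / p x + 1 / q x = 1"
  shows "\<exists>C>0. \<forall>r z \<theta> t. 1/2 < r \<and> r < 1 \<and> cmod z < 1 \<and> \<theta> \<in> {0..2*pi}
            \<and> z = complex_of_real (cmod z) * cis \<theta> \<and> t \<in> {0..2*pi}
            \<and> phi_fun q r z \<theta> t > 1
          \<longrightarrow> phi_fun q r z \<theta> t powr p t \<le> C * phi_fun q r z \<theta> t powr p \<theta>"
proof -
  obtain C where C: "0 < C" "log_hoelder_with C p"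
    using p_logH log_hoelder_iff_with by blast
  obtain P where p_le: "\<forall>y\<in>{0..2*pi}. p y \<le> P"
    using continuous_attains_sup[OF compact_Icc _ log_hoelder_with_continuous_on[OF C(2,1)]]
    by auto
  define K where "K = max (exp (2 * C * (ln 6 / ln 2 + 1))) (12 powr P)"
  have "0 < K" by (simp add: K_def less_max_iff_disj)
  moreover have "phi_fun q r z \<theta> t powr p t \<le> K * phi_fun q r z \<theta> t powr p \<theta>"
    if "1/2 < r" "r < 1" "cmod z < 1" "\<theta> \<in> {0..2*pi}" "t \<in> {0..2*pi}"
      and "1 < phi_fun q r z \<theta> t" for r z \<theta> t
  proof -
    have "1 \<le> p \<theta>" "1 \<le> q \<theta>" using p_ge q_ge that(4) by auto
    then show ?thesis
      unfolding K_def using phi_fun_powr_le[OF C(2,1) p_per p_le] that by simp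
  qed
  ultimately show ?thesis by blast
qed

end
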